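(* Let $S$ be a finite semigroup and let $I$ be an ideal of $S$ (possibly $I=\varnothing$). Then $$\mathbf{Sub}(S)=\big\{\langle (U\setminus\{0\})\cup L \rangle \;\big|\; U\in \mathbf{Sub}(S/I),\ L\in\mathbf{Sub}(I)\big\},$$ where for each $U\in\mathbf{Sub}(S/I)$ the set $U\setminus\{0\}$ is regarded as a subset of $S\setminus I\subseteq S$, and the generated subsemigroup $\langle\cdot\rangle$ is taken in $S$.
   Context: For a semigroup $X$, $\mathbf{Sub}(X)$ denotes the set of all subsemigroups of $X$, where the empty set is considered a subsemigroup (so $\varnothing\in\mathbf{Sub}(X)$). For $A\subseteq S$, $\langle A\rangle$ denotes the least subsemigroup of $S$ containing $A$ (so $\langle\varnothing\rangle=\varnothing$). For an ideal $I$ of $S$, the Rees factor semigroup $S/I$ has elements $(S\setminus I)\cup\{0\}$, where $0$ is a new symbol not in $S$, with multiplication $s\cdot t=st$ if $s,t,st\in S\setminus I$, and $s\cdot t=0$ otherwise (in particular $S/\varnothing\cong S^0$, $S$ with a zero adjoined). A subsemigroup of $S/I$ need not contain $0$. *)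

theory Defs
  imports Main
begin

text \<open>The finite semigroup S is the universe of a type of class semigroup_mult and finite.
Sub(X) includes the empty set.\<close>

definition subsemigroup :: "'a::semigroup_mult set \<Rightarrow> bool" where
  "subsemigroup A \<longleftrightarrow> (\<forall>x\<in>A. \<forall>y\<in>A. x * y \<in> A)"

definition generated :: "'a::semigroup_mult set \<Rightarrow> 'a set" where
  "generated A = \<Inter> {B. A \<subseteq> B \<and> subsemigroup B}"

definition semigroup_ideal :: "'a::semigroup_mult set \<Rightarrow> bool" where
  "semigroup_ideal I \<longleftrightarrow> (\<forall>s i. i \<in> I \<longrightarrow> s * i \<in> I \<and> i * s \<in> I)"

text \<open>Rees factor S/I: elements are Some s for s not in I, and None playing the role of 0.\<close>

definition rees_carrier :: "'a::semigroup_mult set \<Rightarrow> 'a option set" where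
  "rees_carrier I = insert None (Some ` (- I))"

fun rees_mult :: "'a::semigroup_mult set \<Rightarrow> 'a option \<Rightarrow> 'a option \<Rightarrow> 'a option" where
  "rees_mult I (Some s) (Some t) =
     (if s \<notin> I \<and> t \<notin> I \<and> s * t \<notin> I then Some (s * t) else None)"
| "rees_mult I _ _ = None"

definition rees_subsemigroups :: "'a::semigroup_mult set \<Rightarrow> 'a option set set" where
  "rees_subsemigroups I =
     {U. U \<subseteq> rees_carrier I \<and> (\<forall>x\<in>U. \<forall>y\<in>U. rees_mult I x y \<in> U)}"

end

theory Submission
  imports Defs
begin

text \<open>Every subsemigroup A is generated by its part outside I together with its part inside I;
the part outside I, with the zero adjoined, is closed under the Rees multiplication, because a
product that falls into I is sent to the zero.\<close>

lemma subsemigroup_generated: "subsemigroup (generated X)"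
  unfolding generated_def subsemigroup_def by blast

lemma generated_eq_self: "subsemigroup A \<Longrightarrow> generated A = A"
  unfolding generated_def by blast

lemma subsemigroup_Int:
  "subsemigroup A \<Longrightarrow> subsemigroup B \<Longrightarrow> subsemigroup (A \<inter> B)"
  unfolding subsemigroup_def by blast

lemma subsemigroup_ideal:
  "semigroup_ideal I \<Longrightarrow> subsemigroup I"
  unfolding semigroup_ideal_def subsemigroup_def by blast

lemma rees_image_in_rees_subsemigroups:
  assumes "subsemigroup A"
  shows "insert None (Some ` (A - I)) \<in> rees_subsemigroups I"
  unfolding rees_subsemigroups_def rees_carrier_def
proof (intro CollectI conjI ballI)
  fix x y assume "x \<in> insert None (Some ` (A - I))" "y \<in> insert None (Some ` (A - I))"
  then show "rees_mult I x y \<in> insert None (Some ` (A - I))"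
    using assms by (cases x; cases y) (auto simp: subsemigroup_def)
qed auto

theorem lemma4p1:
  fixes I :: "'a::{semigroup_mult, finite} set"
  assumes "semigroup_ideal I"
  shows "{A :: 'a set. subsemigroup A} =
    {generated ({s. Some s \<in> U} \<union> L) | U L.
       U \<in> rees_subsemigroups I \<and> L \<subseteq> I \<and> subsemigroup L}"
    (is "?Sub = ?Gen")
proof
  show "?Gen \<subseteq> ?Sub"
    using subsemigroup_generated by blast
  show "?Sub \<subseteq> ?Gen"
  proof
    fix A assume "A \<in> ?Sub"
    then have A: "subsemigroup A" by simp
    let ?U = "insert None (Some ` (A - I))"
    have "{s. Some s \<in> ?U} \<union> (A \<inter> I) = A" by auto
    then have "A = generated ({s. Some s \<in> ?U} \<union> (A \<inter> I))"
      using generated_eq_self[OF A] by simp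
    moreover have "subsemigroup (A \<inter> I)"
      using A assms by (simp add: subsemigroup_Int subsemigroup_ideal)
    ultimately show "A \<in> ?Gen"
      using rees_image_in_rees_subsemigroups[OF A] by blast
  qed
qed

end
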